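(* Let $R$ be any nonempty set of reward functions $r':\mathcal{S}\times\mathcal{A}\to\mathbb{R}$. Then there exists a (time-indexed) reward function $r=(r_t)_{t=1}^T$ with $r_t:\mathcal{S}\times\mathcal{A}\to[-\infty,\infty)$ such that $$\arg\max_{\pi\in\Pi}J(\pi,r)\subseteq\arg\max_{\pi\in\Pi}\ \inf_{r'\in R}\mathbb{E}_\pi\Big[\sum_{t=1}^T r'(s_t,a_t)\Big].$$
   Context: Finite-horizon MDP: finite state set $\mathcal{S}$, finite action set $\mathcal{A}$, horizon $T\ge1$, initial distribution $p_1$, transition kernel $p(s'\mid s,a)$. $\Pi$ is the set of Markov (possibly time-dependent) policies $\pi=(\pi_t(\cdot\mid s))_{t=1}^T$, with $\pi(a_t\mid s_t)$ meaning $\pi_t(a_t\mid s_t)$; $\mathbb{E}_\pi$ is expectation over trajectories generated by $\pi$. For a time-indexed reward $r$ (values $-\infty$ allowed), the MaxEnt RL objective is $J(\pi,r)=\mathbb{E}_\pi[\sum_{t=1}^T r_t(s_t,a_t)]+\mathcal{H}_\pi[a\mid s]$ with $\mathcal{H}_\pi[a\mid s]=\mathbb{E}_\pi[-\sum_{t=1}^T\log\pi(a_t\mid s_t)]$ ($0\log0=0$). *)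

theory Defs
  imports "HOL-Analysis.Analysis" "HOL-Library.Extended_Real"
begin

text \<open>Finite-horizon MDP with finite state type 's and finite action type 'a.
  Time steps are 1..T. A trajectory is a function t \<mapsto> (s_t, a_t) on {1..T}
  (extensional, default value undefined outside). A Markov policy is
  pi t s a = pi_t(a | s).\<close>

definition traj :: "nat \<Rightarrow> (nat \<Rightarrow> 's \<times> 'a) set" where
  "traj T = PiE {1..T} (\<lambda>_. UNIV)"

definition policies :: "nat \<Rightarrow> (nat \<Rightarrow> 's \<Rightarrow> 'a::finite \<Rightarrow> real) set" where
  "policies T = {\<pi>. \<forall>t\<in>{1..T}. \<forall>s. (\<forall>a. 0 \<le> \<pi> t s a) \<and> (\<Sum>a\<in>UNIV. \<pi> t s a) = 1}"

definition traj_prob ::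
  "('s \<Rightarrow> real) \<Rightarrow> ('s \<Rightarrow> 'a \<Rightarrow> 's \<Rightarrow> real) \<Rightarrow> nat \<Rightarrow> (nat \<Rightarrow> 's \<Rightarrow> 'a \<Rightarrow> real)
     \<Rightarrow> (nat \<Rightarrow> 's \<times> 'a) \<Rightarrow> real" where
  "traj_prob p1 p T \<pi> \<tau> =
     p1 (fst (\<tau> 1))
     * (\<Prod>t\<in>{1..T}. \<pi> t (fst (\<tau> t)) (snd (\<tau> t)))
     * (\<Prod>t\<in>{2..T}. p (fst (\<tau> (t - 1))) (snd (\<tau> (t - 1))) (fst (\<tau> t)))"

text \<open>E_pi[sum_t r_t(s_t,a_t)] for a time-indexed extended-real reward (0 * -inf = 0).\<close>
definition exp_return ::
  "('s \<Rightarrow> real) \<Rightarrow> ('s \<Rightarrow> 'a \<Rightarrow> 's \<Rightarrow> real) \<Rightarrow> nat \<Rightarrow> (nat \<Rightarrow> 's \<Rightarrow> 'a \<Rightarrow> real)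
     \<Rightarrow> (nat \<Rightarrow> 's \<Rightarrow> 'a \<Rightarrow> ereal) \<Rightarrow> ereal" where
  "exp_return p1 p T \<pi> r =
     (\<Sum>\<tau>\<in>traj T. ereal (traj_prob p1 p T \<pi> \<tau>) * (\<Sum>t\<in>{1..T}. r t (fst (\<tau> t)) (snd (\<tau> t))))"

text \<open>Causal entropy H_pi[a|s] = E_pi[- sum_t log pi_t(a_t|s_t)]; trajectories of
  probability zero contribute 0 (so 0 log 0 = 0).\<close>
definition causal_entropy ::
  "('s \<Rightarrow> real) \<Rightarrow> ('s \<Rightarrow> 'a \<Rightarrow> 's \<Rightarrow> real) \<Rightarrow> nat \<Rightarrow> (nat \<Rightarrow> 's \<Rightarrow> 'a \<Rightarrow> real) \<Rightarrow> real" where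
  "causal_entropy p1 p T \<pi> =
     (\<Sum>\<tau>\<in>traj T. traj_prob p1 p T \<pi> \<tau> * (\<Sum>t\<in>{1..T}. - ln (\<pi> t (fst (\<tau> t)) (snd (\<tau> t)))))"

definition maxent_J ::
  "('s \<Rightarrow> real) \<Rightarrow> ('s \<Rightarrow> 'a \<Rightarrow> 's \<Rightarrow> real) \<Rightarrow> nat \<Rightarrow> (nat \<Rightarrow> 's \<Rightarrow> 'a \<Rightarrow> real)
     \<Rightarrow> (nat \<Rightarrow> 's \<Rightarrow> 'a \<Rightarrow> ereal) \<Rightarrow> ereal" where
  "maxent_J p1 p T \<pi> r = exp_return p1 p T \<pi> r + ereal (causal_entropy p1 p T \<pi>)"

definition robust_obj ::
  "('s \<Rightarrow> real) \<Rightarrow> ('s \<Rightarrow> 'a \<Rightarrow> 's \<Rightarrow> real) \<Rightarrow> nat \<Rightarrow> ('s \<Rightarrow> 'a \<Rightarrow> real) set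
     \<Rightarrow> (nat \<Rightarrow> 's \<Rightarrow> 'a \<Rightarrow> real) \<Rightarrow> ereal" where
  "robust_obj p1 p T R \<pi> =
     (INF r'\<in>R. ereal (\<Sum>\<tau>\<in>traj T. traj_prob p1 p T \<pi> \<tau> * (\<Sum>t\<in>{1..T}. r' (fst (\<tau> t)) (snd (\<tau> t)))))"

definition argmax_set :: "'x set \<Rightarrow> ('x \<Rightarrow> ereal) \<Rightarrow> 'x set" where
  "argmax_set A f = {x\<in>A. \<forall>y\<in>A. f y \<le> f x}"

end

theory Submission
  imports Defs
begin

text \<open>Let \<open>\<pi>\<^sub>R\<close> maximise the robust objective; it exists because that objective, an infimum of
  functions continuous in the policy, is upper semicontinuous on the compact set of policies. Take as
  reward \<open>r\<close> the log-probabilities of \<open>\<pi>\<^sub>R\<close> (with \<open>ln 0 = -\<infinity>\<close>). In the likelihood ratio of two policies the initial and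
  transition probabilities cancel, so \<open>J(\<pi>, r)\<close> is minus the Kullback--Leibler divergence of the
  trajectory distribution of \<open>\<pi>\<close> from that of \<open>\<pi>\<^sub>R\<close>. Hence \<open>J(\<pi>, r) \<le> 0 = J(\<pi>\<^sub>R, r)\<close>, and by the
  equality case of Gibbs' inequality every maximiser of \<open>J(\<cdot>, r)\<close> induces the trajectory
  distribution of \<open>\<pi>\<^sub>R\<close>, hence has the same robust objective.\<close>

lemma finite_traj: "finite (traj T :: (nat \<Rightarrow> 's::finite \<times> 'a::finite) set)"
  unfolding traj_def by (intro finite_PiE) auto

lemma sum_traj_Suc:
  fixes f :: "(nat \<Rightarrow> 's::finite \<times> 'a::finite) \<Rightarrow> 'b::comm_monoid_add"
  shows "(\<Sum>\<tau>\<in>traj (Suc n). f \<tau>) = (\<Sum>\<tau>\<in>traj n. \<Sum>x\<in>UNIV. f (\<tau>(Suc n := x)))"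
proof -
  have "{1..Suc n} = insert (Suc n) {1..n}" by auto
  then have "(\<Sum>\<tau>\<in>traj (Suc n). f \<tau>) = (\<Sum>(\<tau>, x)\<in>traj n \<times> UNIV. f (\<tau>(Suc n := x)))"
    unfolding traj_def
    by (intro sum.reindex_bij_witness[of _ "\<lambda>(\<tau>, x). \<tau>(Suc n := x)"
          "\<lambda>\<tau>. (\<tau>(Suc n := undefined), \<tau> (Suc n))"])
       (auto simp: PiE_def extensional_def)
  also have "\<dots> = (\<Sum>\<tau>\<in>traj n. \<Sum>x\<in>UNIV. f (\<tau>(Suc n := x)))"
    by (simp add: sum.cartesian_product)
  finally show ?thesis .
qed

lemma traj_0: "traj 0 = {\<lambda>_. undefined}"
  by (simp add: traj_def)

lemma traj_prob_fun_upd_Suc: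
  assumes "1 \<le> n"
  shows "traj_prob p1 p (Suc n) \<pi> (\<tau>(Suc n := x)) =
     traj_prob p1 p n \<pi> \<tau> * \<pi> (Suc n) (fst x) (snd x) * p (fst (\<tau> n)) (snd (\<tau> n)) (fst x)"
proof -
  let ?\<tau>' = "\<tau>(Suc n := x)"
  have "(\<Prod>t\<in>{1..n}. \<pi> t (fst (?\<tau>' t)) (snd (?\<tau>' t))) = (\<Prod>t\<in>{1..n}. \<pi> t (fst (\<tau> t)) (snd (\<tau> t)))"
    by (intro prod.cong) auto
  moreover have "(\<Prod>t\<in>{2..n}. p (fst (?\<tau>' (t - 1))) (snd (?\<tau>' (t - 1))) (fst (?\<tau>' t)))
      = (\<Prod>t\<in>{2..n}. p (fst (\<tau> (t - 1))) (snd (\<tau> (t - 1))) (fst (\<tau> t)))"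
    by (intro prod.cong) auto
  ultimately show ?thesis
    using assms unfolding traj_prob_def by (simp add: prod.cl_ivl_Suc mult_ac)
qed

lemma policies_Suc_subset: "policies (Suc n) \<subseteq> policies n"
  unfolding policies_def by auto

lemma traj_prob_nonneg:
  assumes "\<forall>s. 0 \<le> p1 s" "\<forall>s a s'. 0 \<le> p s a s'" "\<pi> \<in> policies T"
  shows "0 \<le> traj_prob p1 p T \<pi> \<tau>"
  using assms unfolding traj_prob_def policies_def
  by (intro mult_nonneg_nonneg prod_nonneg) auto

lemma sum_traj_prob:
  fixes p1 :: "'s::finite \<Rightarrow> real" and p :: "'s \<Rightarrow> 'a::finite \<Rightarrow> 's \<Rightarrow> real"
  assumes "(\<Sum>s\<in>UNIV. p1 s) = 1" "\<forall>s a. (\<Sum>s'\<in>UNIV. p s a s') = 1"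
    and "\<pi> \<in> policies T" "1 \<le> T"
  shows "(\<Sum>\<tau>\<in>traj T. traj_prob p1 p T \<pi> \<tau>) = 1"
  using assms(4,3)
proof (induction T arbitrary: \<pi> rule: nat_induct_at_least)
  case base
  have "(\<Sum>\<tau>\<in>traj 1. traj_prob p1 p 1 \<pi> \<tau>) = (\<Sum>(s, a)\<in>UNIV. p1 s * \<pi> 1 s a)"
    by (simp add: sum_traj_Suc[where n = 0, simplified] traj_0 traj_prob_def split_def)
  also have "\<dots> = (\<Sum>s\<in>UNIV. p1 s * (\<Sum>a\<in>UNIV. \<pi> 1 s a))"
    by (simp add: sum.cartesian_product sum_distrib_left)
  also have "\<dots> = 1"
    using base assms(1) unfolding policies_def by simp
  finally show ?case .
next
  case (Suc n)
  have step: "(\<Sum>(s, a)\<in>UNIV. \<pi> (Suc n) s a * p (fst (\<tau> n)) (snd (\<tau> n)) s) = 1"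
    for \<tau> :: "nat \<Rightarrow> 's \<times> 'a"
  proof -
    have "(\<Sum>(s, a)\<in>UNIV. \<pi> (Suc n) s a * p (fst (\<tau> n)) (snd (\<tau> n)) s)
        = (\<Sum>s\<in>UNIV. (\<Sum>a\<in>UNIV. \<pi> (Suc n) s a) * p (fst (\<tau> n)) (snd (\<tau> n)) s)"
      by (simp add: sum.cartesian_product sum_distrib_right)
    also have "\<dots> = 1"
      using Suc.prems assms(2) unfolding policies_def by simp
    finally show ?thesis .
  qed
  have "(\<Sum>\<tau>\<in>traj (Suc n). traj_prob p1 p (Suc n) \<pi> \<tau>)
      = (\<Sum>\<tau>\<in>traj n. traj_prob p1 p n \<pi> \<tau> *
           (\<Sum>(s, a)\<in>UNIV. \<pi> (Suc n) s a * p (fst (\<tau> n)) (snd (\<tau> n)) s))"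
    by (simp add: sum_traj_Suc traj_prob_fun_upd_Suc[OF Suc.hyps(1)] sum_distrib_left
        split_def mult_ac)
  also have "\<dots> = 1"
    using Suc.IH Suc.prems policies_Suc_subset by (auto simp: step)
  finally show ?case .
qed

lemma compact_INF_continuous_attains_sup:
  fixes g :: "'i \<Rightarrow> 'x::topological_space \<Rightarrow> real"
  assumes "compact K" "K \<noteq> {}" "\<And>i. i \<in> I \<Longrightarrow> continuous_on UNIV (g i)"
  shows "\<exists>x\<in>K. \<forall>y\<in>K. (INF i\<in>I. ereal (g i y)) \<le> (INF i\<in>I. ereal (g i x))"
proof -
  define f where "f y = (INF i\<in>I. ereal (g i y))" for y
  define S where "S = (SUP y\<in>K. f y)"
  define C where "C c = (\<Inter>i\<in>I. {y. c \<le> ereal (g i y)})" for c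
  have C_iff: "y \<in> C c \<longleftrightarrow> c \<le> f y" for y c
    unfolding C_def f_def by (auto simp: le_INF_iff)
  have "K \<inter> (\<Inter>c\<in>{c. c < S}. C c) \<noteq> {}"
  proof (rule compact_imp_fip_image[OF assms(1)])
    show "closed (C c)" for c
      unfolding C_def
      by (intro closed_INT ballI closed_Collect_le continuous_on_const continuous_on_ereal assms(3))
  next
    fix I' assume I': "finite I'" "I' \<subseteq> {c. c < S}"
    show "K \<inter> (\<Inter>c\<in>I'. C c) \<noteq> {}"
    proof (cases "I' = {}")
      case True
      then show ?thesis using assms(2) by simp
    next
      case False
      with I' have "Max I' < S" by auto
      then obtain y where "y \<in> K" "Max I' < f y"
        unfolding S_def by (auto simp: less_SUP_iff)
      then have "y \<in> C c" if "c \<in> I'" for c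
        using Max_ge[OF I'(1) that] by (simp add: C_iff)
      with \<open>y \<in> K\<close> show ?thesis
        by blast
    qed
  qed
  then obtain x where x: "x \<in> K" "\<forall>c<S. c \<le> f x"
    by (auto simp: C_iff)
  from x(2) have "S \<le> f x"
    by (auto intro: dense_le)
  then have "f y \<le> f x" if "y \<in> K" for y
    unfolding S_def by (rule order_trans[OF SUP_upper[OF that]])
  with x(1) show ?thesis
    unfolding f_def by blast
qed

lemma compact_PiE_UNIV:
  fixes S :: "'b::topological_space set"
  assumes "compact S"
  shows "compact (PiE (UNIV :: 'i set) (\<lambda>_. S))"
  using assms compactin_PiE[of "\<lambda>_. euclidean" UNIV "\<lambda>_. S"]
  by (simp add: euclidean_product_topology)

lemma compact_unit_box:
  "compact {\<pi> :: 'i \<Rightarrow> 'j \<Rightarrow> 'k \<Rightarrow> real. \<forall>t s a. 0 \<le> \<pi> t s a \<and> \<pi> t s a \<le> 1}"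
proof -
  have "{\<pi> :: 'i \<Rightarrow> 'j \<Rightarrow> 'k \<Rightarrow> real. \<forall>t s a. 0 \<le> \<pi> t s a \<and> \<pi> t s a \<le> 1}
      = PiE UNIV (\<lambda>_. PiE UNIV (\<lambda>_. PiE UNIV (\<lambda>_. {0..1})))"
    by (auto simp: PiE_UNIV_domain Pi_iff)
  then show ?thesis
    by (simp add: compact_PiE_UNIV)
qed

lemma continuous_on_policy_component [continuous_intros]:
  "continuous_on S (\<lambda>\<pi> :: 'i \<Rightarrow> 'j \<Rightarrow> 'k \<Rightarrow> real. \<pi> t s a)"
  by (rule continuous_on_subset[OF _ subset_UNIV], rule continuous_on_product_then_coordinatewise,
      rule continuous_on_product_then_coordinatewise, rule continuous_on_product_coordinates)

lemma closed_policies: "closed (policies T)"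
proof -
  have policies_eq: "policies T = (\<Inter>t\<in>{1..T}. \<Inter>s. (\<Inter>a. {\<pi>. 0 \<le> \<pi> t s a}) \<inter> {\<pi>. (\<Sum>a\<in>UNIV. \<pi> t s a) = 1})"
    unfolding policies_def by auto
  show ?thesis
    unfolding policies_eq by (intro closed_INT ballI closed_Int closed_Collect_le closed_Collect_eq
        continuous_on_const continuous_on_sum continuous_on_policy_component)
qed

lemma policy_le_1:
  assumes "\<pi> \<in> policies T" "t \<in> {1..T}"
  shows "\<pi> t s a \<le> 1"
proof -
  have "\<pi> t s a \<le> (\<Sum>a\<in>UNIV. \<pi> t s a)"
    using assms unfolding policies_def by (intro member_le_sum) auto
  then show ?thesis
    using assms unfolding policies_def by simp
qed

lemma traj_prob_cong:
  assumes "\<And>t. t \<in> {1..T} \<Longrightarrow> \<pi> t = \<pi>' t"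
  shows "traj_prob p1 p T \<pi> \<tau> = traj_prob p1 p T \<pi>' \<tau>"
  unfolding traj_prob_def using assms by (intro arg_cong2[where f = "(*)"] refl prod.cong) auto

lemma robust_obj_cong:
  assumes "\<forall>\<tau>\<in>traj T. traj_prob p1 p T \<pi> \<tau> = traj_prob p1 p T \<pi>' \<tau>"
  shows "robust_obj p1 p T R \<pi> = robust_obj p1 p T R \<pi>'"
  unfolding robust_obj_def using assms by (simp cong: sum.cong)

lemma continuous_on_traj_prob [continuous_intros]:
  "continuous_on S (\<lambda>\<pi>. traj_prob p1 p T \<pi> \<tau>)"
  unfolding traj_prob_def by (intro continuous_intros)

lemma robust_obj_attains_max:
  fixes p1 :: "'s::finite \<Rightarrow> real" and p :: "'s \<Rightarrow> 'a::finite \<Rightarrow> 's \<Rightarrow> real"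
  shows "\<exists>\<pi>\<^sub>R\<in>policies T. \<forall>\<pi>\<in>policies T. robust_obj p1 p T R \<pi> \<le> robust_obj p1 p T R \<pi>\<^sub>R"
proof -
  define K :: "(nat \<Rightarrow> 's \<Rightarrow> 'a \<Rightarrow> real) set" where
    "K = {\<pi>. \<forall>t s a. 0 \<le> \<pi> t s a \<and> \<pi> t s a \<le> 1} \<inter> policies T"
  have "compact K"
    unfolding K_def using compact_unit_box closed_policies by (rule compact_Int_closed)
  moreover have "(\<lambda>_ _ _. 1 / real CARD('a)) \<in> K"
    unfolding K_def policies_def by auto
  ultimately have "\<exists>\<pi>\<^sub>R\<in>K. \<forall>\<pi>\<in>K. robust_obj p1 p T R \<pi> \<le> robust_obj p1 p T R \<pi>\<^sub>R"
    unfolding robust_obj_def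
    by (intro compact_INF_continuous_attains_sup continuous_intros) auto
  then obtain \<pi>\<^sub>R where \<pi>\<^sub>R: "\<pi>\<^sub>R \<in> K" "\<forall>\<pi>\<in>K. robust_obj p1 p T R \<pi> \<le> robust_obj p1 p T R \<pi>\<^sub>R"
    by blast
  have "robust_obj p1 p T R \<pi> \<le> robust_obj p1 p T R \<pi>\<^sub>R" if "\<pi> \<in> policies T" for \<pi>
  proof -
    \<comment> \<open>\<open>policies T\<close> itself is not compact, as components outside the horizon are
      unconstrained; zeroing them lands in \<open>K\<close> without changing the objective.\<close>
    define \<pi>' where "\<pi>' t = (if t \<in> {1..T} then \<pi> t else (\<lambda>_ _. 0))" for t
    have "\<pi>' \<in> K"
      using that policy_le_1[OF that] unfolding K_def policies_def \<pi>'_def by auto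
    moreover have "robust_obj p1 p T R \<pi>' = robust_obj p1 p T R \<pi>"
      by (intro robust_obj_cong ballI traj_prob_cong) (simp add: \<pi>'_def)
    ultimately show ?thesis
      using \<pi>\<^sub>R(2) by metis
  qed
  with \<pi>\<^sub>R(1) show ?thesis
    unfolding K_def by blast
qed

definition traj_loglik :: "nat \<Rightarrow> (nat \<Rightarrow> 's \<Rightarrow> 'a \<Rightarrow> real) \<Rightarrow> (nat \<Rightarrow> 's \<times> 'a) \<Rightarrow> real" where
  "traj_loglik T \<pi> \<tau> = (\<Sum>t\<in>{1..T}. ln (\<pi> t (fst (\<tau> t)) (snd (\<tau> t))))"

definition log_reward :: "(nat \<Rightarrow> 's \<Rightarrow> 'a \<Rightarrow> real) \<Rightarrow> nat \<Rightarrow> 's \<Rightarrow> 'a \<Rightarrow> ereal" where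
  "log_reward \<pi> t s a = (if 0 < \<pi> t s a then ereal (ln (\<pi> t s a)) else -\<infinity>)"

lemma traj_prob_pos_imp_policy_pos:
  assumes "\<pi> \<in> policies T" "0 < traj_prob p1 p T \<pi> \<tau>" "t \<in> {1..T}"
  shows "0 < \<pi> t (fst (\<tau> t)) (snd (\<tau> t))"
proof -
  have "\<pi> t (fst (\<tau> t)) (snd (\<tau> t)) \<noteq> 0"
  proof
    assume "\<pi> t (fst (\<tau> t)) (snd (\<tau> t)) = 0"
    with assms(3) have zero: "(\<Prod>t\<in>{1..T}. \<pi> t (fst (\<tau> t)) (snd (\<tau> t))) = 0"
      by (intro prod_zero) auto
    from assms(2) show False
      unfolding traj_prob_def zero by simp
  qed
  moreover have "0 \<le> \<pi> t (fst (\<tau> t)) (snd (\<tau> t))"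
    using assms(1,3) unfolding policies_def by auto
  ultimately show ?thesis
    by simp
qed

lemma traj_prob_policy_change:
  assumes "\<pi> \<in> policies T" "0 < traj_prob p1 p T \<pi> \<tau>"
    and "\<forall>t\<in>{1..T}. 0 < \<pi>' t (fst (\<tau> t)) (snd (\<tau> t))"
  shows "traj_prob p1 p T \<pi>' \<tau> = traj_prob p1 p T \<pi> \<tau> * exp (traj_loglik T \<pi>' \<tau> - traj_loglik T \<pi> \<tau>)"
proof -
  have exp_traj_loglik: "exp (traj_loglik T \<rho> \<tau>) = (\<Prod>t\<in>{1..T}. \<rho> t (fst (\<tau> t)) (snd (\<tau> t)))"
    if "\<forall>t\<in>{1..T}. 0 < \<rho> t (fst (\<tau> t)) (snd (\<tau> t))" for \<rho>
    unfolding traj_loglik_def exp_sum[OF finite_atLeastAtMost] using that by (intro prod.cong) auto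
  have "\<forall>t\<in>{1..T}. 0 < \<pi> t (fst (\<tau> t)) (snd (\<tau> t))"
    using traj_prob_pos_imp_policy_pos[OF assms(1,2)] by blast
  then have B: "(\<Prod>t\<in>{1..T}. \<pi> t (fst (\<tau> t)) (snd (\<tau> t))) = exp (traj_loglik T \<pi> \<tau>)"
    by (rule exp_traj_loglik[symmetric])
  have B': "(\<Prod>t\<in>{1..T}. \<pi>' t (fst (\<tau> t)) (snd (\<tau> t))) = exp (traj_loglik T \<pi>' \<tau>)"
    using assms(3) by (rule exp_traj_loglik[symmetric])
  let ?A = "p1 (fst (\<tau> 1))"
  let ?C = "\<Prod>t\<in>{2..T}. p (fst (\<tau> (t - 1))) (snd (\<tau> (t - 1))) (fst (\<tau> t))"
  have "traj_prob p1 p T \<pi>' \<tau> = ?A * exp (traj_loglik T \<pi>' \<tau>) * ?C"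
    unfolding traj_prob_def B' ..
  also have "\<dots> = ?A * exp (traj_loglik T \<pi> \<tau>) * ?C * exp (traj_loglik T \<pi>' \<tau> - traj_loglik T \<pi> \<tau>)"
    by (simp add: exp_diff)
  also have "?A * exp (traj_loglik T \<pi> \<tau>) * ?C = traj_prob p1 p T \<pi> \<tau>"
    unfolding traj_prob_def B ..
  finally show ?thesis .
qed

lemma causal_entropy_eq:
  "causal_entropy p1 p T \<pi> = - (\<Sum>\<tau>\<in>traj T. traj_prob p1 p T \<pi> \<tau> * traj_loglik T \<pi> \<tau>)"
  unfolding causal_entropy_def traj_loglik_def by (simp add: sum_negf sum_distrib_left)

lemma sum_ereal_eq_MInfty:
  fixes f :: "'x \<Rightarrow> ereal"
  assumes "finite A" "x \<in> A" "f x = -\<infinity>" "\<forall>y\<in>A. f y \<noteq> \<infinity>"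
  shows "(\<Sum>y\<in>A. f y) = -\<infinity>"
proof -
  have "(\<Sum>y\<in>A. f y) = f x + (\<Sum>y\<in>A - {x}. f y)"
    using assms(1,2) by (rule sum.remove)
  moreover have "(\<Sum>y\<in>A - {x}. f y) \<noteq> \<infinity>"
    using assms(4) by (simp add: sum_Pinfty)
  ultimately show ?thesis
    using assms(3) by simp
qed

lemma exp_return_log_reward:
  assumes "\<forall>s. 0 \<le> p1 s" "\<forall>s a s'. 0 \<le> p s a s'" "\<pi> \<in> policies T"
    and "\<forall>\<tau>\<in>traj T. 0 < traj_prob p1 p T \<pi> \<tau> \<longrightarrow> (\<forall>t\<in>{1..T}. 0 < \<pi>' t (fst (\<tau> t)) (snd (\<tau> t)))"
  shows "exp_return p1 p T \<pi> (log_reward \<pi>') =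
    ereal (\<Sum>\<tau>\<in>traj T. traj_prob p1 p T \<pi> \<tau> * traj_loglik T \<pi>' \<tau>)"
proof -
  have "ereal (traj_prob p1 p T \<pi> \<tau>) * (\<Sum>t\<in>{1..T}. log_reward \<pi>' t (fst (\<tau> t)) (snd (\<tau> t)))
      = ereal (traj_prob p1 p T \<pi> \<tau> * traj_loglik T \<pi>' \<tau>)" if "\<tau> \<in> traj T" for \<tau>
  proof (cases "0 < traj_prob p1 p T \<pi> \<tau>")
    case True
    with assms(4) that have "\<forall>t\<in>{1..T}. 0 < \<pi>' t (fst (\<tau> t)) (snd (\<tau> t))"
      by blast
    then have "(\<Sum>t\<in>{1..T}. log_reward \<pi>' t (fst (\<tau> t)) (snd (\<tau> t)))
        = (\<Sum>t\<in>{1..T}. ereal (ln (\<pi>' t (fst (\<tau> t)) (snd (\<tau> t)))))"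
      unfolding log_reward_def by (intro sum.cong) auto
    then show ?thesis
      by (simp add: traj_loglik_def)
  next
    case False
    with traj_prob_nonneg[OF assms(1-3)] have "traj_prob p1 p T \<pi> \<tau> = 0"
      by (simp add: order_less_le)
    then show ?thesis
      by (simp add: zero_ereal_def[symmetric])
  qed
  then show ?thesis
    unfolding exp_return_def by (simp cong: sum.cong)
qed

lemma exp_return_log_reward_MInfty:
  fixes p1 :: "'s::finite \<Rightarrow> real" and \<pi>' :: "nat \<Rightarrow> 's \<Rightarrow> 'a::finite \<Rightarrow> real"
  assumes "\<forall>s. 0 \<le> p1 s" "\<forall>s a s'. 0 \<le> p s a s'" "\<pi> \<in> policies T"
    and "\<tau> \<in> traj T" "0 < traj_prob p1 p T \<pi> \<tau>" "t \<in> {1..T}" "\<not> 0 < \<pi>' t (fst (\<tau> t)) (snd (\<tau> t))"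
  shows "exp_return p1 p T \<pi> (log_reward \<pi>') = -\<infinity>"
  unfolding exp_return_def
proof (rule sum_ereal_eq_MInfty[OF finite_traj assms(4)])
  have "(\<Sum>t\<in>{1..T}. log_reward \<pi>' t (fst (\<tau> t)) (snd (\<tau> t))) = -\<infinity>"
    using assms(6,7) by (intro sum_ereal_eq_MInfty) (auto simp: log_reward_def)
  with assms(5) show "ereal (traj_prob p1 p T \<pi> \<tau>) *
      (\<Sum>t\<in>{1..T}. log_reward \<pi>' t (fst (\<tau> t)) (snd (\<tau> t))) = -\<infinity>"
    by simp
  show "\<forall>\<sigma>\<in>traj T. ereal (traj_prob p1 p T \<pi> \<sigma>) *
      (\<Sum>t\<in>{1..T}. log_reward \<pi>' t (fst (\<sigma> t)) (snd (\<sigma> t))) \<noteq> \<infinity>"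
  proof
    fix \<sigma> :: "nat \<Rightarrow> 's \<times> 'a"
    have "(\<Sum>t\<in>{1..T}. log_reward \<pi>' t (fst (\<sigma> t)) (snd (\<sigma> t))) \<noteq> \<infinity>"
      by (simp add: sum_Pinfty log_reward_def)
    with traj_prob_nonneg[OF assms(1-3)] show "ereal (traj_prob p1 p T \<pi> \<sigma>) *
        (\<Sum>t\<in>{1..T}. log_reward \<pi>' t (fst (\<sigma> t)) (snd (\<sigma> t))) \<noteq> \<infinity>"
      by (cases "\<Sum>t\<in>{1..T}. log_reward \<pi>' t (fst (\<sigma> t)) (snd (\<sigma> t))")
        (auto simp: less_eq_real_def)
  qed
qed

lemma maxent_J_log_reward:
  assumes "\<forall>s. 0 \<le> p1 s" "\<forall>s a s'. 0 \<le> p s a s'" "\<pi> \<in> policies T"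
    and "\<forall>\<tau>\<in>traj T. 0 < traj_prob p1 p T \<pi> \<tau> \<longrightarrow> (\<forall>t\<in>{1..T}. 0 < \<pi>' t (fst (\<tau> t)) (snd (\<tau> t)))"
  shows "maxent_J p1 p T \<pi> (log_reward \<pi>') =
    ereal (\<Sum>\<tau>\<in>traj T. traj_prob p1 p T \<pi> \<tau> * (ln (traj_prob p1 p T \<pi>' \<tau>) - ln (traj_prob p1 p T \<pi> \<tau>)))"
proof -
  have "traj_prob p1 p T \<pi> \<tau> * (traj_loglik T \<pi>' \<tau> - traj_loglik T \<pi> \<tau>)
      = traj_prob p1 p T \<pi> \<tau> * (ln (traj_prob p1 p T \<pi>' \<tau>) - ln (traj_prob p1 p T \<pi> \<tau>))"
    if "\<tau> \<in> traj T" for \<tau>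
  proof (cases "0 < traj_prob p1 p T \<pi> \<tau>")
    case True
    with assms(4) that have "\<forall>t\<in>{1..T}. 0 < \<pi>' t (fst (\<tau> t)) (snd (\<tau> t))"
      by blast
    from traj_prob_policy_change[where \<pi>' = \<pi>', OF assms(3) True this] True show ?thesis
      by (simp add: ln_mult_pos)
  qed (use traj_prob_nonneg[OF assms(1-3), of \<tau>] in simp)
  then have "(\<Sum>\<tau>\<in>traj T. traj_prob p1 p T \<pi> \<tau> * (traj_loglik T \<pi>' \<tau> - traj_loglik T \<pi> \<tau>))
      = (\<Sum>\<tau>\<in>traj T. traj_prob p1 p T \<pi> \<tau> * (ln (traj_prob p1 p T \<pi>' \<tau>) - ln (traj_prob p1 p T \<pi> \<tau>)))"
    by (rule sum.cong[OF refl])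
  moreover have "maxent_J p1 p T \<pi> (log_reward \<pi>') =
      ereal (\<Sum>\<tau>\<in>traj T. traj_prob p1 p T \<pi> \<tau> * (traj_loglik T \<pi>' \<tau> - traj_loglik T \<pi> \<tau>))"
    unfolding maxent_J_def exp_return_log_reward[OF assms] causal_entropy_eq
    by (simp add: right_diff_distrib sum_subtractf)
  ultimately show ?thesis
    by simp
qed

lemma gibbs_inequality_eq:
  fixes q q' :: "'x \<Rightarrow> real"
  assumes "finite A" "\<forall>x\<in>A. 0 \<le> q x" "\<forall>x\<in>A. 0 \<le> q' x" "\<forall>x\<in>A. 0 < q x \<longrightarrow> 0 < q' x"
    and "sum q' A \<le> sum q A" "0 \<le> (\<Sum>x\<in>A. q x * (ln (q' x) - ln (q x)))"
  shows "\<forall>x\<in>A. q x = q' x"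
proof -
  define d where "d x = q' x - q x - q x * (ln (q' x) - ln (q x))" for x
  have d_nonneg: "0 \<le> d x" and d_pos: "q x \<noteq> q' x \<Longrightarrow> 0 < d x" if x: "x \<in> A" for x
  proof -
    consider "q x = 0" | "0 < q x" "0 < q' x"
      using assms(2,4) x by force
    then have "0 \<le> d x \<and> (q x \<noteq> q' x \<longrightarrow> 0 < d x)"
    proof cases
      case 1
      then show ?thesis
        using assms(3) x by (auto simp: d_def)
    next
      case 2
      then show ?thesis
        using ln_diff_le[of "q' x" "q x"] ln_diff_less[of "q' x" "q x"]
        by (auto simp: d_def field_simps)
    qed
    then show "0 \<le> d x" "q x \<noteq> q' x \<Longrightarrow> 0 < d x"
      by auto
  qed
  have "sum d A \<le> 0"
    using assms(5,6) by (simp add: d_def sum_subtractf)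
  with d_nonneg have "\<forall>x\<in>A. d x = 0"
    using sum_nonneg_eq_0_iff[OF assms(1)] by (metis order_antisym sum_nonneg)
  with d_pos show ?thesis
    by fastforce
qed

lemma argmax_maxent_J_log_reward_traj_prob:
  fixes p1 :: "'s::finite \<Rightarrow> real" and p :: "'s \<Rightarrow> 'a::finite \<Rightarrow> 's \<Rightarrow> real"
  assumes "T \<ge> 1"
    and "\<forall>s. 0 \<le> p1 s" and "(\<Sum>s\<in>UNIV. p1 s) = 1"
    and "\<forall>s a s'. 0 \<le> p s a s'" and "\<forall>s a. (\<Sum>s'\<in>UNIV. p s a s') = 1"
    and "\<pi>' \<in> policies T"
    and "\<pi> \<in> argmax_set (policies T) (\<lambda>\<pi>. maxent_J p1 p T \<pi> (log_reward \<pi>'))"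
  shows "\<forall>\<tau>\<in>traj T. traj_prob p1 p T \<pi> \<tau> = traj_prob p1 p T \<pi>' \<tau>"
proof -
  let ?P = "traj_prob p1 p T"
  have \<pi>: "\<pi> \<in> policies T" "maxent_J p1 p T \<pi>' (log_reward \<pi>') \<le> maxent_J p1 p T \<pi> (log_reward \<pi>')"
    using assms(6,7) unfolding argmax_set_def by auto
  have "maxent_J p1 p T \<pi>' (log_reward \<pi>') = 0"
    using maxent_J_log_reward[OF assms(2,4,6)] traj_prob_pos_imp_policy_pos[OF assms(6)]
    by (simp add: zero_ereal_def)
  with \<pi> have J_nonneg: "0 \<le> maxent_J p1 p T \<pi> (log_reward \<pi>')"
    by simp
  have supp: "\<forall>\<tau>\<in>traj T. 0 < ?P \<pi> \<tau> \<longrightarrow> (\<forall>t\<in>{1..T}. 0 < \<pi>' t (fst (\<tau> t)) (snd (\<tau> t)))"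
  proof (rule ccontr)
    assume "\<not> ?thesis"
    then obtain \<tau> t where "\<tau> \<in> traj T" "0 < ?P \<pi> \<tau>" "t \<in> {1..T}" "\<not> 0 < \<pi>' t (fst (\<tau> t)) (snd (\<tau> t))"
      by blast
    then have "maxent_J p1 p T \<pi> (log_reward \<pi>') = -\<infinity>"
      unfolding maxent_J_def using exp_return_log_reward_MInfty[OF assms(2,4) \<pi>(1)] by simp
    with J_nonneg show False
      by simp
  qed
  show ?thesis
  proof (rule gibbs_inequality_eq[OF finite_traj])
    show "\<forall>\<tau>\<in>traj T. 0 \<le> ?P \<pi> \<tau>" "\<forall>\<tau>\<in>traj T. 0 \<le> ?P \<pi>' \<tau>"
      using traj_prob_nonneg[OF assms(2,4)] \<pi>(1) assms(6) by blast+
    show "\<forall>\<tau>\<in>traj T. 0 < ?P \<pi> \<tau> \<longrightarrow> 0 < ?P \<pi>' \<tau>"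
    proof (intro ballI impI)
      fix \<tau> assume "\<tau> \<in> traj T" "0 < ?P \<pi> \<tau>"
      with supp have "\<forall>t\<in>{1..T}. 0 < \<pi>' t (fst (\<tau> t)) (snd (\<tau> t))"
        by blast
      from traj_prob_policy_change[where \<pi>' = \<pi>', OF \<pi>(1) \<open>0 < ?P \<pi> \<tau>\<close> this] \<open>0 < ?P \<pi> \<tau>\<close>
      show "0 < ?P \<pi>' \<tau>"
        by simp
    qed
    show "sum (?P \<pi>') (traj T) \<le> sum (?P \<pi>) (traj T)"
      using sum_traj_prob[OF assms(3,5) _ assms(1)] \<pi>(1) assms(6) by simp
    show "0 \<le> (\<Sum>\<tau>\<in>traj T. ?P \<pi> \<tau> * (ln (?P \<pi>' \<tau>) - ln (?P \<pi> \<tau>)))"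
      using J_nonneg unfolding maxent_J_log_reward[OF assms(2,4) \<pi>(1) supp] by simp
  qed
qed

theorem theorem3:
  fixes p1 :: "'s::finite \<Rightarrow> real"
    and p :: "'s \<Rightarrow> 'a::finite \<Rightarrow> 's \<Rightarrow> real"
    and T :: nat
    and R :: "('s \<Rightarrow> 'a \<Rightarrow> real) set"
  assumes "T \<ge> 1"
    and "\<forall>s. 0 \<le> p1 s" and "(\<Sum>s\<in>UNIV. p1 s) = 1"
    and "\<forall>s a s'. 0 \<le> p s a s'" and "\<forall>s a. (\<Sum>s'\<in>UNIV. p s a s') = 1"
    and "R \<noteq> {}"
  shows "\<exists>r :: nat \<Rightarrow> 's \<Rightarrow> 'a \<Rightarrow> ereal.
           (\<forall>t s a. r t s a \<noteq> \<infinity>) \<and>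
           argmax_set (policies T) (\<lambda>\<pi>. maxent_J p1 p T \<pi> r)
             \<subseteq> argmax_set (policies T) (robust_obj p1 p T R)"
proof -
  obtain \<pi>\<^sub>R where \<pi>\<^sub>R: "\<pi>\<^sub>R \<in> policies T"
    "\<forall>\<pi>\<in>policies T. robust_obj p1 p T R \<pi> \<le> robust_obj p1 p T R \<pi>\<^sub>R"
    using robust_obj_attains_max by blast
  have "\<pi> \<in> argmax_set (policies T) (robust_obj p1 p T R)"
    if "\<pi> \<in> argmax_set (policies T) (\<lambda>\<pi>. maxent_J p1 p T \<pi> (log_reward \<pi>\<^sub>R))" for \<pi>
  proof -
    have "robust_obj p1 p T R \<pi> = robust_obj p1 p T R \<pi>\<^sub>R"
      using argmax_maxent_J_log_reward_traj_prob[OF assms(1-5) \<pi>\<^sub>R(1) that]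
      by (rule robust_obj_cong)
    with that \<pi>\<^sub>R(2) show ?thesis
      unfolding argmax_set_def by simp
  qed
  moreover have "\<forall>t s a. log_reward \<pi>\<^sub>R t s a \<noteq> \<infinity>"
    by (simp add: log_reward_def)
  ultimately show ?thesis
    by (intro exI[of _ "log_reward \<pi>\<^sub>R"]) blast
qed

end
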